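(* Let $G$ be a finite group and $\mathcal{P}$ a prime ideal of $\mathrm{Gh}(\underline{A}_G)$ with $\mathcal{P}(G/e)=(p)\subseteq\mathbb{Z}$ for a prime $p$. For $I\le G$ let $p_I\ge0$ be the integer with $\mathcal{P}(G/G)=\widetilde{A}(G)\cap\prod_{I\le G}p_I\mathbb{Z}$, and set $\mathscr{F}(\mathcal{P})=\{I\le G: p_I\ne1\}$. Then $\mathcal{P}=\mathcal{P}_{\mathscr{F}(\mathcal{P}),p}$.
   Context: For $H\le G$, $\widetilde{A}(H)$ is the subring of $\prod_{I\le H}\mathbb{Z}$ of tuples $(a_I)_{I\le H}$ with $a_{hIh^{-1}}=a_I$ for $h\in H$ (so $\widetilde{A}(e)=\mathbb{Z}$). $\mathrm{Gh}(\underline{A}_G)$ is the $G$-Tambara functor with $\mathrm{Gh}(\underline{A}_G)(G/H)=\widetilde{A}(H)$ and, for $H\le K$, $g\in G$, $I^g=g^{-1}Ig$: $\mathrm{res}^K_H(b)_L=b_L$; $\mathrm{tr}^K_H(a)_I=\sum_{kH\in K/H,\ I^k\le H}a_{I^k}$; $\mathrm{nm}^K_H(a)_I=\prod_{IgH\in I\backslash K/H}a_{I^g\cap H}$; $c_{g,H}(a)_J=a_{J^g}$ for $J\le gHg^{-1}$. For a set $\mathscr{F}$ of subgroups closed under conjugation and $p$ a prime or $0$, $\mathcal{P}_{\mathscr{F},p}(G/H)=\widetilde{A}(H)\cap\prod_{I\le H}\delta(I)\mathbb{Z}$ where $\delta(I)=p$ if $I\in\mathscr{F}$ and $1$ otherwise.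 A Tambara ideal is a collection of ideals $\mathcal{I}(G/H)$ closed under all restrictions, transfers, norms and conjugations; it is prime (Nakaoka) if it is not everything and whenever $a\in T(G/K_1)$, $b\in T(G/K_2)$ satisfy $\big(\mathrm{nm}^L_{g_1H_1g_1^{-1}}c_{g_1,H_1}\mathrm{res}^{K_1}_{H_1}(a)\big)\big(\mathrm{nm}^L_{g_2H_2g_2^{-1}}c_{g_2,H_2}\mathrm{res}^{K_2}_{H_2}(b)\big)\in\mathcal{I}(G/L)$ for all $L,H_1,H_2\le G$, $g_1,g_2\in G$ with $H_i\le K_i$, $g_iH_ig_i^{-1}\le L$, then $a\in\mathcal{I}(G/K_1)$ or $b\in\mathcal{I}(G/K_2)$. *)

theory Defs
  imports "HOL-Algebra.Group" "HOL-Computational_Algebra.Primes"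
begin

(* Elements of tilde-A(H) are functions a :: 'a set => int, vanishing off
   the subgroups I <= H, and invariant under H-conjugation. *)

definition sle :: "('a, 'b) monoid_scheme \<Rightarrow> 'a set \<Rightarrow> 'a set \<Rightarrow> bool" where
  "sle G I H \<longleftrightarrow> subgroup I G \<and> I \<subseteq> H"

(* conjg G g H = g H g^{-1};  I^g = g^{-1} I g = conjg G (inv g) I *)
definition conjg :: "('a, 'b) monoid_scheme \<Rightarrow> 'a \<Rightarrow> 'a set \<Rightarrow> 'a set" where
  "conjg G g H = (\<lambda>h. g \<otimes>\<^bsub>G\<^esub> h \<otimes>\<^bsub>G\<^esub> inv\<^bsub>G\<^esub> g) ` H"

definition Atil :: "('a, 'b) monoid_scheme \<Rightarrow> 'a set \<Rightarrow> ('a set \<Rightarrow> int) set" where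
  "Atil G H = {a. (\<forall>I. \<not> sle G I H \<longrightarrow> a I = 0) \<and>
                  (\<forall>h\<in>H. \<forall>I. sle G I H \<longrightarrow> a (conjg G h I) = a I)}"

definition lcos :: "('a, 'b) monoid_scheme \<Rightarrow> 'a \<Rightarrow> 'a set \<Rightarrow> 'a set" where
  "lcos G k H = (\<lambda>h. k \<otimes>\<^bsub>G\<^esub> h) ` H"

definition dcos :: "('a, 'b) monoid_scheme \<Rightarrow> 'a set \<Rightarrow> 'a \<Rightarrow> 'a set \<Rightarrow> 'a set" where
  "dcos G I g H = {i \<otimes>\<^bsub>G\<^esub> g \<otimes>\<^bsub>G\<^esub> h | i h. i \<in> I \<and> h \<in> H}"

definition res :: "('a, 'b) monoid_scheme \<Rightarrow> 'a set \<Rightarrow> ('a set \<Rightarrow> int) \<Rightarrow> ('a set \<Rightarrow> int)" where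
  "res G H b = (\<lambda>L. if sle G L H then b L else 0)"

(* tr^K_H(a)_I = sum over kH in K/H with I^k <= H of a_{I^k} *)
definition tr :: "('a, 'b) monoid_scheme \<Rightarrow> 'a set \<Rightarrow> 'a set \<Rightarrow> ('a set \<Rightarrow> int) \<Rightarrow> ('a set \<Rightarrow> int)" where
  "tr G K H a = (\<lambda>I. if sle G I K then
      (\<Sum>C\<in>{lcos G k H | k. k \<in> K}.
         (let k = (SOME k. k \<in> C) in
            if conjg G (inv\<^bsub>G\<^esub> k) I \<subseteq> H then a (conjg G (inv\<^bsub>G\<^esub> k) I) else 0))
     else 0)"

(* nm^K_H(a)_I = product over IgH in I\K/H of a_{I^g \<inter> H} *)
definition nm :: "('a, 'b) monoid_scheme \<Rightarrow> 'a set \<Rightarrow> 'a set \<Rightarrow> ('a set \<Rightarrow> int) \<Rightarrow> ('a set \<Rightarrow> int)" where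
  "nm G K H a = (\<lambda>I. if sle G I K then
      (\<Prod>D\<in>{dcos G I g H | g. g \<in> K}.
         (let g = (SOME g. g \<in> D) in a (conjg G (inv\<^bsub>G\<^esub> g) I \<inter> H)))
     else 0)"

definition cg :: "('a, 'b) monoid_scheme \<Rightarrow> 'a \<Rightarrow> 'a set \<Rightarrow> ('a set \<Rightarrow> int) \<Rightarrow> ('a set \<Rightarrow> int)" where
  "cg G g H a = (\<lambda>J. if sle G J (conjg G g H) then a (conjg G (inv\<^bsub>G\<^esub> g) J) else 0)"

definition is_ideal :: "('a, 'b) monoid_scheme \<Rightarrow> 'a set \<Rightarrow> ('a set \<Rightarrow> int) set \<Rightarrow> bool" where
  "is_ideal G H J \<longleftrightarrow> J \<subseteq> Atil G H \<and> (\<lambda>_. 0) \<in> J \<and>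
     (\<forall>a\<in>J. \<forall>b\<in>J. (\<lambda>I. a I + b I) \<in> J) \<and>
     (\<forall>a\<in>J. \<forall>r\<in>Atil G H. (\<lambda>I. r I * a I) \<in> J)"

(* Tambara ideal of Gh(A_G); P H is the value at G/H *)
definition tambara_ideal :: "('a, 'b) monoid_scheme \<Rightarrow> ('a set \<Rightarrow> ('a set \<Rightarrow> int) set) \<Rightarrow> bool" where
  "tambara_ideal G P \<longleftrightarrow>
     (\<forall>H. subgroup H G \<longrightarrow> is_ideal G H (P H)) \<and>
     (\<forall>H K. subgroup H G \<longrightarrow> subgroup K G \<longrightarrow> H \<subseteq> K \<longrightarrow>
        (\<forall>b\<in>P K. res G H b \<in> P H) \<and>
        (\<forall>a\<in>P H. tr G K H a \<in> P K \<and> nm G K H a \<in> P K)) \<and>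
     (\<forall>g\<in>carrier G. \<forall>H. subgroup H G \<longrightarrow> (\<forall>a\<in>P H. cg G g H a \<in> P (conjg G g H)))"

definition nakaoka_prime :: "('a, 'b) monoid_scheme \<Rightarrow> ('a set \<Rightarrow> ('a set \<Rightarrow> int) set) \<Rightarrow> bool" where
  "nakaoka_prime G P \<longleftrightarrow> tambara_ideal G P \<and>
     (\<exists>H. subgroup H G \<and> P H \<noteq> Atil G H) \<and>
     (\<forall>K1 K2 a b. subgroup K1 G \<longrightarrow> subgroup K2 G \<longrightarrow> a \<in> Atil G K1 \<longrightarrow> b \<in> Atil G K2 \<longrightarrow>
        (\<forall>L H1 H2 g1 g2. subgroup L G \<longrightarrow> subgroup H1 G \<longrightarrow> subgroup H2 G \<longrightarrow>
           g1 \<in> carrier G \<longrightarrow> g2 \<in> carrier G \<longrightarrow> H1 \<subseteq> K1 \<longrightarrow> H2 \<subseteq> K2 \<longrightarrow>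
           conjg G g1 H1 \<subseteq> L \<longrightarrow> conjg G g2 H2 \<subseteq> L \<longrightarrow>
           (\<lambda>I. nm G L (conjg G g1 H1) (cg G g1 H1 (res G H1 a)) I *
                nm G L (conjg G g2 H2) (cg G g2 H2 (res G H2 b)) I) \<in> P L) \<longrightarrow>
        a \<in> P K1 \<or> b \<in> P K2)"

definition Pfp :: "('a, 'b) monoid_scheme \<Rightarrow> 'a set set \<Rightarrow> int \<Rightarrow> 'a set \<Rightarrow> ('a set \<Rightarrow> int) set" where
  "Pfp G F p H = {a \<in> Atil G H. \<forall>I. sle G I H \<longrightarrow> (if I \<in> F then p else 1) dvd a I}"

end

(* Write p_I for pI I. Norming p \<in> P(G/e) up to G gives the value p^n at I, so p_I divides a
   power of p. Nakaoka primality, applied to x and y times the indicator of the conjugacy class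
   of I, shows that p_I | x y forces p_I | x or p_I | y: the products of norms that have to lie
   in P are coordinatewise divisible by norms of p_I times that indicator, and an ideal of Atil(L)
   contains every element coordinatewise divisible by its members. Hence p_I is 1 or p, and every
   element of P_{F,p}(G/H) is a multiple of the restriction of (p_I)_I \<in> P(G/G). Conversely, for
   a \<in> P(G/H) and J \<le> H with p_J = p, the element of P(G/J) concentrated at J with value a_J,
   normed up to the normalizer of J and transferred to G, has J-coordinate a_J^m; so p | a_J. *)

theory Submission
  imports Defs "HOL-Algebra.Group_Action"
begin

section \<open>Conjugation of subgroups\<close>

context group begin

lemma conjg_eq_cosets: "conjg G g X = g <# X #> inv g"
  unfolding conjg_def l_coset_def r_coset_def by auto

lemma conjg_subgroup: "g \<in> carrier G \<Longrightarrow> subgroup I G \<Longrightarrow> subgroup (conjg G g I) G"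
  by (simp add: conjg_eq_cosets subgroup_conjugation_is_surj2)

lemma conjg_comp:
  "g \<in> carrier G \<Longrightarrow> h \<in> carrier G \<Longrightarrow> X \<subseteq> carrier G \<Longrightarrow>
   conjg G g (conjg G h X) = conjg G (g \<otimes> h) X"
  unfolding conjg_def image_image
  by (rule image_cong) (auto simp: inv_mult_group m_assoc subsetD)

lemma conjg_one: "X \<subseteq> carrier G \<Longrightarrow> conjg G \<one> X = X"
  unfolding conjg_def by (auto simp: subsetD)

lemma conjg_inv_conjg: "g \<in> carrier G \<Longrightarrow> X \<subseteq> carrier G \<Longrightarrow> conjg G (inv g) (conjg G g X) = X"
  by (simp add: conjg_comp conjg_one)

lemma conjg_conjg_inv: "g \<in> carrier G \<Longrightarrow> X \<subseteq> carrier G \<Longrightarrow> conjg G g (conjg G (inv g) X) = X"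
  by (simp add: conjg_comp conjg_one)

lemma conjg_mono: "X \<subseteq> Y \<Longrightarrow> conjg G g X \<subseteq> conjg G g Y"
  unfolding conjg_def by auto

lemma card_conjg: "g \<in> carrier G \<Longrightarrow> X \<subseteq> carrier G \<Longrightarrow> card (conjg G g X) = card X"
  unfolding conjg_def by (intro card_image inj_onI) (auto intro: conjugation_is_inj)

lemma conjg_by_member: assumes "subgroup J G" "h \<in> J" shows "conjg G h J = J"
proof -
  interpret J: subgroup J G by fact
  have into: "conjg G k J \<subseteq> J" if "k \<in> J" for k
    using that unfolding conjg_def by (auto intro!: J.m_closed J.m_inv_closed)
  have "J = conjg G h (conjg G (inv h) J)"
    using assms by (simp add: conjg_conjg_inv J.subset)
  also have "\<dots> \<subseteq> conjg G h J"
    using into assms(2) J.m_inv_closed by (intro conjg_mono) blast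
  finally show ?thesis using into[OF assms(2)] by blast
qed

lemma sle_conjg: assumes "subgroup L G" "h \<in> L" "sle G I L" shows "sle G (conjg G h I) L"
proof -
  have "conjg G h I \<subseteq> conjg G h L" using assms(3) unfolding sle_def by (simp add: conjg_mono)
  also have "\<dots> = L" using conjg_by_member assms by simp
  finally have "conjg G h I \<subseteq> L" .
  moreover have "subgroup (conjg G h I) G"
    using assms by (intro conjg_subgroup) (auto simp: sle_def subgroup.mem_carrier)
  ultimately show ?thesis unfolding sle_def by simp
qed

lemma normalizer_eq: "J \<subseteq> carrier G \<Longrightarrow> normalizer G J = {g \<in> carrier G. conjg G g J = J}"
  unfolding normalizer_def stabilizer_def by (auto simp: conjg_eq_cosets)

end

section \<open>The rings \<open>Atil\<close> and their ideals\<close>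

lemma Atil_vanish: "f \<in> Atil G L \<Longrightarrow> \<not> sle G I L \<Longrightarrow> f I = 0"
  unfolding Atil_def by auto

lemma Atil_conjg: "f \<in> Atil G L \<Longrightarrow> h \<in> L \<Longrightarrow> sle G I L \<Longrightarrow> f (conjg G h I) = f I"
  unfolding Atil_def by auto

lemma Atil_scale: "f \<in> Atil G L \<Longrightarrow> (\<lambda>K. c * f K) \<in> Atil G L"
  unfolding Atil_def by auto

lemma Atil_mult: "f \<in> Atil G L \<Longrightarrow> g \<in> Atil G L \<Longrightarrow> (\<lambda>K. f K * g K) \<in> Atil G L"
  unfolding Atil_def by auto

lemma Atil_cancel:
  assumes "(\<lambda>I. f I * d I) \<in> Atil G L" "d \<in> Atil G L" "\<forall>I. sle G I L \<longrightarrow> d I \<noteq> 0"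
    "\<forall>I. \<not> sle G I L \<longrightarrow> f I = 0"
  shows "f \<in> Atil G L"
  unfolding Atil_def
proof (intro CollectI conjI allI ballI impI)
  fix I assume "\<not> sle G I L" then show "f I = 0" using assms(4) by simp
next
  fix h I assume h: "h \<in> L" and I: "sle G I L"
  have "f (conjg G h I) * d (conjg G h I) = f I * d I"
    using Atil_conjg[OF assms(1) h I] by simp
  moreover have "d (conjg G h I) = d I" using Atil_conjg[OF assms(2) h I] .
  ultimately show "f (conjg G h I) = f I" using assms(3) I by simp
qed

lemma sle_carrier_iff: "sle G K (carrier G) \<longleftrightarrow> subgroup K G"
  unfolding sle_def using subgroup.subset by auto

lemma finite_sle: "finite (carrier G) \<Longrightarrow> finite {K. sle G K L}"
  unfolding sle_def by (rule finite_subset[of _ "Pow (carrier G)"]) (auto dest: subgroup.subset)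

definition conj_class :: "('a, 'b) monoid_scheme \<Rightarrow> 'a set \<Rightarrow> 'a set \<Rightarrow> 'a set set" where
  "conj_class G L J = {K. sle G K L \<and> (\<exists>h\<in>L. K = conjg G h J)}"

definition class_indicator :: "('a, 'b) monoid_scheme \<Rightarrow> 'a set \<Rightarrow> 'a set \<Rightarrow> 'a set \<Rightarrow> int" where
  "class_indicator G L J K = (if K \<in> conj_class G L J then 1 else 0)"

context group begin

lemma conj_class_conjg:
  assumes L: "subgroup L G" and h: "h \<in> L" and I: "sle G I L" and J: "J \<subseteq> carrier G"
  shows "conjg G h I \<in> conj_class G L J \<longleftrightarrow> I \<in> conj_class G L J"
proof -
  interpret L: subgroup L G by fact
  have I_carrier: "I \<subseteq> carrier G" using I unfolding sle_def by (simp add: subgroup.subset)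
  show ?thesis
  proof
    assume "conjg G h I \<in> conj_class G L J"
    then obtain k where k: "k \<in> L" "conjg G h I = conjg G k J" unfolding conj_class_def by auto
    have "I = conjg G (inv h) (conjg G h I)" using conjg_inv_conjg I_carrier h by simp
    also have "\<dots> = conjg G (inv h \<otimes> k) J" using k h J by (simp add: conjg_comp)
    finally show "I \<in> conj_class G L J" unfolding conj_class_def using I h k by auto
  next
    assume "I \<in> conj_class G L J"
    then obtain k where k: "k \<in> L" "I = conjg G k J" unfolding conj_class_def by auto
    have "conjg G h I = conjg G (h \<otimes> k) J" using k h J by (simp add: conjg_comp)
    then show "conjg G h I \<in> conj_class G L J"
      unfolding conj_class_def using sle_conjg[OF L h I] h k by auto
  qed
qed

lemma class_indicator_Atil:
  "subgroup L G \<Longrightarrow> J \<subseteq> carrier G \<Longrightarrow> class_indicator G L J \<in> Atil G L"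
  unfolding Atil_def class_indicator_def by (auto simp: conj_class_conjg) (simp add: conj_class_def)

lemma self_in_conj_class: assumes "subgroup L G" "sle G J L" shows "J \<in> conj_class G L J"
  using assms conjg_one[of J] unfolding conj_class_def sle_def
  by (auto intro!: bexI[of _ \<one>] subgroup.one_closed subgroup.subset)

lemma conj_class_of_self: assumes "subgroup J G" shows "conj_class G J J = {J}"
proof -
  have "J \<in> conj_class G J J" using assms by (intro self_in_conj_class) (auto simp: sle_def)
  moreover have "K = J" if "K \<in> conj_class G J J" for K
    using that conjg_by_member[OF assms] unfolding conj_class_def by auto
  ultimately show ?thesis by blast
qed

lemma Atil_const_on_conj_class:
  assumes "f \<in> Atil G L" "sle G J L" "K \<in> conj_class G L J" shows "f K = f J"
proof -
  obtain h where "h \<in> L" "K = conjg G h J" using assms(3) unfolding conj_class_def by blast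
  then show ?thesis using Atil_conjg[OF assms(1) _ assms(2)] by simp
qed

lemma coordinatewise_dvd_imp_mem_ideal:
  assumes fin: "finite (carrier G)" and L: "subgroup L G" and Q: "is_ideal G L Q"
    and "Y \<in> Atil G L" and "\<forall>J. sle G J L \<longrightarrow> (\<exists>z\<in>Q. z J dvd Y J)"
  shows "Y \<in> Q"
  using assms(4,5)
proof (induction "card {K. Y K \<noteq> 0}" arbitrary: Y rule: less_induct)
  case less
  have supp_sle: "{K. Y K \<noteq> 0} \<subseteq> {K. sle G K L}" using less.prems(1) Atil_vanish by blast
  have fin_supp: "finite {K. Y K \<noteq> 0}" using finite_subset[OF supp_sle finite_sle[OF fin]] .
  show ?case
  proof (cases "\<exists>J. Y J \<noteq> 0")
    case False
    then have "Y = (\<lambda>_. 0)" by auto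
    then show ?thesis using Q unfolding is_ideal_def by simp
  next
    case True
    then obtain J where J: "Y J \<noteq> 0" by blast
    then have sJ: "sle G J L" using supp_sle by auto
    have J_carrier: "J \<subseteq> carrier G" using sJ unfolding sle_def by (simp add: subgroup.subset)
    obtain z where z: "z \<in> Q" "z J dvd Y J" using less.prems(2) sJ by blast
    have z_Atil: "z \<in> Atil G L" using z Q unfolding is_ideal_def by auto
    \<comment> \<open>On the class of \<open>J\<close>, \<open>Y\<close> is the multiple \<open>(Y J div z J) * z\<close>; remove it and induct.\<close>
    define r where "r = (\<lambda>K. (Y J div z J) * class_indicator G L J K)"
    define Y' where "Y' = (\<lambda>K. if K \<in> conj_class G L J then 0 else Y K)"
    have "r \<in> Atil G L" unfolding r_def by (intro Atil_scale class_indicator_Atil L J_carrier)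
    then have rz: "(\<lambda>K. r K * z K) \<in> Q" using Q z(1) unfolding is_ideal_def by blast
    have Y'_Atil: "Y' \<in> Atil G L"
      unfolding Atil_def Y'_def using less.prems(1) conj_class_conjg[OF L _ _ J_carrier]
      by (auto simp: Atil_vanish Atil_conjg)
    have "{K. Y' K \<noteq> 0} \<subset> {K. Y K \<noteq> 0}"
      using J self_in_conj_class[OF L sJ] unfolding Y'_def by auto
    then have "card {K. Y' K \<noteq> 0} < card {K. Y K \<noteq> 0}" using psubset_card_mono[OF fin_supp] by blast
    moreover have "\<forall>J'. sle G J' L \<longrightarrow> (\<exists>z\<in>Q. z J' dvd Y' J')"
      using less.prems(2) unfolding Y'_def by (metis dvd_0_right)
    ultimately have "Y' \<in> Q" using less.hyps[OF _ Y'_Atil] by simp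
    moreover have "Y = (\<lambda>K. Y' K + r K * z K)"
    proof
      fix K show "Y K = Y' K + r K * z K"
      proof (cases "K \<in> conj_class G L J")
        case True
        then have "Y K = Y J" "z K = z J"
          using Atil_const_on_conj_class[OF _ sJ] less.prems(1) z_Atil by auto
        then show ?thesis using True z(2) unfolding Y'_def r_def class_indicator_def by simp
      qed (simp add: Y'_def r_def class_indicator_def)
    qed
    ultimately show ?thesis using Q rz unfolding is_ideal_def by metis
  qed
qed

end

section \<open>Restriction, norm and transfer\<close>

lemma res_scale: "res G H (\<lambda>I. c * f I) = (\<lambda>I. c * res G H f I)"
  unfolding res_def by auto

lemma res_mult: "res G H (\<lambda>I. f I * g I) = (\<lambda>I. res G H f I * res G H g I)"
  unfolding res_def by auto

lemma nm_scale: "nm G K H (\<lambda>I. c * f I) I = c ^ card {dcos G I g H | g. g \<in> K} * nm G K H f I"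
  unfolding nm_def Let_def by (simp add: prod.distrib)

lemma nm_mult: "nm G K H (\<lambda>I. f I * g I) = (\<lambda>I. nm G K H f I * nm G K H g I)"
  unfolding nm_def Let_def by (auto simp: prod.distrib)

lemma nm_vanish: "\<not> sle G I K \<Longrightarrow> nm G K H f I = 0"
  unfolding nm_def by simp

lemma nm_eq_prod:
  "sle G I K \<Longrightarrow> nm G K H f I =
     (\<Prod>D\<in>{dcos G I g H | g. g \<in> K}. f (conjg G (inv\<^bsub>G\<^esub> (SOME g. g \<in> D)) I \<inter> H))"
  unfolding nm_def Let_def by simp

context group begin

lemma dcos_subset: "subgroup L G \<Longrightarrow> I \<subseteq> L \<Longrightarrow> H \<subseteq> L \<Longrightarrow> g \<in> L \<Longrightarrow> dcos G I g H \<subseteq> L"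
  unfolding dcos_def by (auto intro!: subgroup.m_closed)

lemma dcos_rep_mem:
  assumes L: "subgroup L G" and I: "sle G I L" and H: "sle G H L"
    and D: "D \<in> {dcos G I g H | g. g \<in> L}"
  shows "(SOME g. g \<in> D) \<in> L"
proof -
  obtain g where g: "g \<in> L" "D = dcos G I g H" using D by blast
  have "g = \<one> \<otimes> g \<otimes> \<one>" using g(1) L by (simp add: subgroup.mem_carrier)
  then have "g \<in> D"
    unfolding g(2) dcos_def using I H unfolding sle_def by (blast intro: subgroup.one_closed)
  then have "(SOME g. g \<in> D) \<in> D" by (rule someI)
  then show ?thesis using dcos_subset[OF L _ _ g(1)] g(2) I H unfolding sle_def by blast
qed

lemma finite_dcos_set:
  assumes "finite (carrier G)" "subgroup L G" "I \<subseteq> L" "H \<subseteq> L"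
  shows "finite {dcos G I g H | g. g \<in> L}"
proof (rule finite_subset)
  show "{dcos G I g H | g. g \<in> L} \<subseteq> Pow (carrier G)"
    using dcos_subset[OF assms(2-4)] subgroup.subset[OF assms(2)] by blast
qed (simp add: assms(1))

lemma nm_const:
  assumes L: "subgroup L G" and I: "sle G I L" and H: "sle G H L"
    and f: "\<And>x. x \<in> L \<Longrightarrow> f (conjg G (inv x) I \<inter> H) = c"
  shows "nm G L H f I = c ^ card {dcos G I g H | g. g \<in> L}"
proof -
  have "nm G L H f I = (\<Prod>D\<in>{dcos G I g H | g. g \<in> L}. c)"
    unfolding nm_eq_prod[OF I] using f dcos_rep_mem[OF L I H] by (intro prod.cong) auto
  then show ?thesis by simp
qed

lemma nm_nonzero:
  assumes fin: "finite (carrier G)" and L: "subgroup L G" and I: "sle G I L" and H: "sle G H L"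
    and f: "\<And>x. x \<in> L \<Longrightarrow> f (conjg G (inv x) I \<inter> H) \<noteq> 0"
  shows "nm G L H f I \<noteq> 0"
  unfolding nm_eq_prod[OF I] using I H f dcos_rep_mem[OF L I H]
  by (subst prod_zero_iff[OF finite_dcos_set[OF fin L]]) (auto simp: sle_def)

lemma nm_res_nonzero:
  assumes fin: "finite (carrier G)" and L: "subgroup L G" and H: "sle G H L" and I: "sle G I L"
    and d: "\<And>K. subgroup K G \<Longrightarrow> d K \<noteq> 0"
  shows "nm G L H (res G H d) I \<noteq> 0"
proof (rule nm_nonzero[OF fin L I H])
  fix x assume "x \<in> L"
  then have "subgroup (conjg G (inv x) I) G"
    using L I unfolding sle_def by (intro conjg_subgroup) (auto simp: subgroup.mem_carrier)
  then have "subgroup (conjg G (inv x) I \<inter> H) G"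
    using H unfolding sle_def by (blast intro: subgroups_Inter_pair)
  then show "res G H d (conjg G (inv x) I \<inter> H) \<noteq> 0" using d unfolding res_def sle_def by simp
qed

lemma cg_res:
  assumes a: "a \<in> Atil G (carrier G)" and g: "g \<in> carrier G" and H: "subgroup H G"
  shows "cg G g H (res G H a) = res G (conjg G g H) a"
proof
  fix J
  show "cg G g H (res G H a) J = res G (conjg G g H) a J"
  proof (cases "sle G J (conjg G g H)")
    case True
    then have J: "subgroup J G" "J \<subseteq> conjg G g H" unfolding sle_def by auto
    have "conjg G (inv g) J \<subseteq> conjg G (inv g) (conjg G g H)" using J(2) by (rule conjg_mono)
    also have "\<dots> = H" using conjg_inv_conjg g H by (simp add: subgroup.subset)
    finally have "sle G (conjg G (inv g) J) H"
      unfolding sle_def using conjg_subgroup[OF inv_closed[OF g] J(1)] by simp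
    moreover have "a (conjg G (inv g) J) = a J"
      using Atil_conjg[OF a inv_closed[OF g]] J(1) unfolding sle_def by (simp add: subgroup.subset)
    ultimately show ?thesis using True unfolding cg_def res_def by simp
  qed (simp add: cg_def res_def)
qed

lemma lcos_eq_l_coset: "lcos G k N = k <# N"
  unfolding lcos_def l_coset_def by auto

lemma subset_normalizer:
  assumes "subgroup J G" shows "J \<subseteq> normalizer G J"
  using assms conjg_by_member by (auto simp: normalizer_eq subgroup.subset subgroup.mem_carrier)

lemma conjg_inv_normalizer:
  assumes "J \<subseteq> carrier G" "g \<in> normalizer G J" shows "conjg G (inv g) J = J"
proof -
  have "inv g \<in> normalizer G J"
    using assms by (simp add: normalizer_imp_subgroup subgroup.m_inv_closed)
  then show ?thesis using assms(1) by (simp add: normalizer_eq)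
qed

lemma nm_point_to_normalizer:
  assumes J: "subgroup J G"
  shows "nm G (normalizer G J) J (\<lambda>K. if K = J then v else 0) J
           = v ^ card {dcos G J g J | g. g \<in> normalizer G J}"
  using J subset_normalizer[OF J] conjg_inv_normalizer[OF subgroup.subset[OF J]]
  by (intro nm_const) (auto simp: normalizer_imp_subgroup subgroup.subset sle_def)

lemma nm_point_to_normalizer_eq_0:
  assumes fin: "finite (carrier G)" and J: "subgroup J G"
    and K: "sle G K (normalizer G J)" "K \<noteq> J" "card K = card J"
  shows "nm G (normalizer G J) J (\<lambda>K. if K = J then v else 0) K = 0"
proof -
  let ?N = "normalizer G J"
  have N: "subgroup ?N G" using J by (simp add: normalizer_imp_subgroup subgroup.subset)
  have sJ: "sle G J ?N" using J subset_normalizer[OF J] unfolding sle_def by simp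
  have K_carrier: "K \<subseteq> carrier G" using K(1) unfolding sle_def by (simp add: subgroup.subset)
  have "conjg G (inv x) K \<inter> J \<noteq> J" if x: "x \<in> ?N" for x
  proof
    have x_carrier: "x \<in> carrier G" using x N by (simp add: subgroup.mem_carrier)
    assume "conjg G (inv x) K \<inter> J = J"
    then have "conjg G x J \<subseteq> conjg G x (conjg G (inv x) K)" by (intro conjg_mono) blast
    then have "J \<subseteq> K"
      using x x_carrier K_carrier J by (simp add: conjg_conjg_inv normalizer_eq subgroup.subset)
    then show False
      using K fin K_carrier by (metis card_subset_eq finite_subset)
  qed
  then have "nm G ?N J (\<lambda>K. if K = J then v else 0) K = 0 ^ card {dcos G K g J | g. g \<in> ?N}"
    by (intro nm_const[OF N K(1) sJ]) simp
  moreover have "card {dcos G K g J | g. g \<in> ?N} \<noteq> 0"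
  proof -
    have "dcos G K \<one> J \<in> {dcos G K g J | g. g \<in> ?N}" using subgroup.one_closed[OF N] by blast
    then show ?thesis
      using finite_dcos_set[OF fin N] K(1) sJ unfolding sle_def by (auto simp: card_eq_0_iff)
  qed
  ultimately show ?thesis by simp
qed

lemma tr_from_normalizer:
  assumes fin: "finite (carrier G)" and J: "subgroup J G"
    and b: "\<And>K. sle G K (normalizer G J) \<Longrightarrow> K \<noteq> J \<Longrightarrow> card K = card J \<Longrightarrow> b K = 0"
  shows "tr G (carrier G) (normalizer G J) b J = b J"
proof -
  let ?N = "normalizer G J"
  let ?Cs = "{lcos G k ?N | k. k \<in> carrier G}"
  let ?f = "\<lambda>C. let k = SOME k. k \<in> C in
              if conjg G (inv k) J \<subseteq> ?N then b (conjg G (inv k) J) else 0"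
  have J_carrier: "J \<subseteq> carrier G" using J by (rule subgroup.subset)
  have N: "subgroup ?N G" using J_carrier by (rule normalizer_imp_subgroup)
  have "?Cs \<subseteq> Pow (carrier G)"
    using l_coset_subset_G[OF subgroup.subset[OF N]] by (auto simp: lcos_eq_l_coset)
  then have fin_Cs: "finite ?Cs" by (rule finite_subset) (simp add: fin)
  have "lcos G \<one> ?N = ?N"
    using coset_join3[OF one_closed N subgroup.one_closed[OF N]] by (simp add: lcos_eq_l_coset)
  then have N_in_Cs: "?N \<in> ?Cs" using one_closed by blast
  have "?f ?N = b J"
  proof -
    have "(SOME k. k \<in> ?N) \<in> ?N" using subgroup.one_closed[OF N] by (rule someI)
    then show ?thesis using conjg_inv_normalizer[OF J_carrier] subset_normalizer[OF J] by simp
  qed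
  moreover have "?f C = 0" if C: "C \<in> ?Cs" "C \<noteq> ?N" for C
  proof -
    obtain k0 where k0: "k0 \<in> carrier G" "C = k0 <# ?N"
      using C(1) by (auto simp: lcos_eq_l_coset)
    have "k0 \<in> C"
      unfolding k0(2) l_coset_def using subgroup.one_closed[OF N] k0(1) r_one by force
    then have k: "(SOME k. k \<in> C) \<in> k0 <# ?N" unfolding k0(2) by (rule someI)
    define k where "k = (SOME k. k \<in> C)"
    have k_carrier: "k \<in> carrier G" using l_coset_carrier[OF k k0(1) N] unfolding k_def .
    have "C = k <# ?N" using l_repr_independence[OF k k0(1) N] k0(2) unfolding k_def by simp
    then have "k \<notin> ?N" using C(2) coset_join3[OF k_carrier N] by blast
    then have "inv k \<notin> ?N" using subgroup.m_inv_closed[OF N] k_carrier by fastforce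
    then have "conjg G (inv k) J \<noteq> J" using k_carrier J_carrier by (simp add: normalizer_eq)
    moreover have "sle G (conjg G (inv k) J) ?N" if "conjg G (inv k) J \<subseteq> ?N"
      using that conjg_subgroup[OF inv_closed[OF k_carrier] J] unfolding sle_def by simp
    moreover have "card (conjg G (inv k) J) = card J"
      using card_conjg[OF inv_closed[OF k_carrier] J_carrier] .
    ultimately show ?thesis unfolding k_def[symmetric] Let_def using b by simp
  qed
  ultimately have "(\<Sum>C\<in>?Cs. ?f C) = b J"
    using sum.remove[OF fin_Cs N_in_Cs, of ?f] sum.neutral[of "?Cs - {?N}" ?f] by simp
  then show ?thesis unfolding tr_def using J by (simp add: sle_def subgroup.subset)
qed

lemma nakaoka_prime_carrierD:
  assumes prime: "nakaoka_prime G P"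
    and a: "a \<in> Atil G (carrier G)" and b: "b \<in> Atil G (carrier G)"
    and ab: "\<And>L A B. subgroup L G \<Longrightarrow> sle G A L \<Longrightarrow> sle G B L \<Longrightarrow>
               (\<lambda>I. nm G L A (res G A a) I * nm G L B (res G B b) I) \<in> P L"
  shows "a \<in> P (carrier G) \<or> b \<in> P (carrier G)"
proof -
  have "(\<lambda>I. nm G L (conjg G g1 H1) (cg G g1 H1 (res G H1 a)) I *
             nm G L (conjg G g2 H2) (cg G g2 H2 (res G H2 b)) I) \<in> P L"
    if "subgroup L G" "subgroup H1 G" "subgroup H2 G" "g1 \<in> carrier G" "g2 \<in> carrier G"
       "conjg G g1 H1 \<subseteq> L" "conjg G g2 H2 \<subseteq> L" for L H1 H2 g1 g2
    unfolding cg_res[OF a that(4,2)] cg_res[OF b that(5,3)]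
    by (rule ab) (simp_all add: sle_def conjg_subgroup that)
  then show ?thesis
    using prime[unfolded nakaoka_prime_def, THEN conjunct2, THEN conjunct2, rule_format,
                OF subgroup_self subgroup_self a b]
    by blast
qed

end

lemma dvd_power_mult_cases:
  fixes q x y A B :: "'a::comm_semiring_1"
  assumes "q dvd x * y"
  shows "q ^ m * A dvd x ^ m * A * (y ^ n * B) \<or> q ^ n * B dvd x ^ m * A * (y ^ n * B)"
proof -
  have "q ^ k dvd x ^ k * y ^ k" for k
    using dvd_power_same[OF assms, of k] by (simp add: power_mult_distrib)
  then have "q ^ min m n dvd x ^ m * y ^ n"
    by (rule dvd_trans) (intro mult_dvd_mono le_imp_power_dvd; simp)
  then show ?thesis
    by (cases "m \<le> n") (auto simp: min_def ac_simps intro: mult_dvd_mono)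
qed

section \<open>Prime ideals of \<open>Gh(A_G)\<close> over a prime \<open>p\<close>\<close>

locale gh_prime_ideal = group G for G :: "('a, 'b) monoid_scheme" (structure) +
  fixes P :: "'a set \<Rightarrow> ('a set \<Rightarrow> int) set" and p :: int and pI :: "'a set \<Rightarrow> int"
  assumes finite_carrier: "finite (carrier G)"
    and nakaoka_prime: "nakaoka_prime G P"
    and prime_p: "prime p"
    and P_trivial: "P {\<one>} = {a \<in> Atil G {\<one>}. p dvd a {\<one>}}"
    and pI_nonneg: "\<And>I. subgroup I G \<Longrightarrow> pI I \<ge> 0"
    and pI_conjg: "\<And>g I. g \<in> carrier G \<Longrightarrow> subgroup I G \<Longrightarrow> pI (conjg G g I) = pI I"
    and P_carrier: "P (carrier G) = {a \<in> Atil G (carrier G). \<forall>I. subgroup I G \<longrightarrow> pI I dvd a I}"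
begin

lemma tambara_ideal: "tambara_ideal G P"
  using nakaoka_prime unfolding nakaoka_prime_def by simp

lemma P_ideal: "subgroup H G \<Longrightarrow> is_ideal G H (P H)"
  using tambara_ideal unfolding tambara_ideal_def by simp

lemma P_Atil: "subgroup H G \<Longrightarrow> a \<in> P H \<Longrightarrow> a \<in> Atil G H"
  using P_ideal unfolding is_ideal_def by blast

lemma P_mult: "subgroup H G \<Longrightarrow> r \<in> Atil G H \<Longrightarrow> a \<in> P H \<Longrightarrow> (\<lambda>I. r I * a I) \<in> P H"
  using P_ideal unfolding is_ideal_def by blast

lemma P_res: "subgroup K G \<Longrightarrow> sle G H K \<Longrightarrow> b \<in> P K \<Longrightarrow> res G H b \<in> P H"
  using tambara_ideal unfolding tambara_ideal_def sle_def by blast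

lemma P_tr: "subgroup K G \<Longrightarrow> sle G H K \<Longrightarrow> a \<in> P H \<Longrightarrow> tr G K H a \<in> P K"
  using tambara_ideal unfolding tambara_ideal_def sle_def by blast

lemma P_nm: "subgroup K G \<Longrightarrow> sle G H K \<Longrightarrow> a \<in> P H \<Longrightarrow> nm G K H a \<in> P K"
  using tambara_ideal unfolding tambara_ideal_def sle_def by blast

lemma pI_dvd_power: assumes I: "subgroup I G" shows "\<exists>n. pI I dvd p ^ n"
proof -
  define a where "a = (\<lambda>K. p * class_indicator G {\<one>} {\<one>} K)"
  have a_one: "a {\<one>} = p"
    using conj_class_of_self[OF triv_subgroup] unfolding a_def class_indicator_def by simp
  have "a \<in> Atil G {\<one>}" unfolding a_def by (intro Atil_scale class_indicator_Atil triv_subgroup) simp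
  then have "a \<in> P {\<one>}" using P_trivial a_one by simp
  then have "nm G (carrier G) {\<one>} a \<in> P (carrier G)"
    by (intro P_nm subgroup_self) (simp_all add: sle_carrier_iff triv_subgroup)
  then have "pI I dvd nm G (carrier G) {\<one>} a I" using P_carrier I by auto
  moreover have "nm G (carrier G) {\<one>} a I = p ^ card {dcos G I g {\<one>} | g. g \<in> carrier G}"
  proof (rule nm_const[OF subgroup_self])
    show "sle G I (carrier G)" "sle G {\<one>} (carrier G)" by (simp_all add: sle_carrier_iff I triv_subgroup)
    fix x assume "x \<in> carrier G"
    then have "\<one> \<in> conjg G (inv x) I" using conjg_subgroup I by (simp add: subgroup.one_closed)
    then have "conjg G (inv x) I \<inter> {\<one>} = {\<one>}" by auto
    then show "a (conjg G (inv x) I \<inter> {\<one>}) = p" using a_one by simp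
  qed
  ultimately show ?thesis by auto
qed

lemma pI_nonzero: assumes "subgroup I G" shows "pI I \<noteq> 0"
proof
  assume "pI I = 0"
  moreover obtain n where "pI I dvd p ^ n" using pI_dvd_power[OF assms] by blast
  ultimately show False using prime_p by (simp add: prime_gt_0_int)
qed

definition pI_tuple :: "'a set \<Rightarrow> int" where
  "pI_tuple K = (if subgroup K G then pI K else 0)"

lemma pI_tuple_in_P: "pI_tuple \<in> P (carrier G)"
proof -
  have "pI_tuple \<in> Atil G (carrier G)"
    unfolding Atil_def pI_tuple_def sle_carrier_iff using pI_conjg conjg_subgroup by auto
  then show ?thesis using P_carrier unfolding pI_tuple_def by auto
qed

text \<open>The definition of \<open>nm\<close> does not visibly preserve \<open>Atil\<close>. Instead, \<open>nm (res (a * pI_tuple))\<close>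
  lies in \<open>P L \<subseteq> Atil G L\<close> and factors as \<open>nm (res a) * nm (res pI_tuple)\<close>, where the second
  factor lies in \<open>Atil G L\<close> and vanishes at no subgroup of \<open>L\<close>.\<close>

lemma nm_res_Atil:
  assumes a: "a \<in> Atil G (carrier G)" and L: "subgroup L G" and H: "sle G H L"
  shows "nm G L H (res G H a) \<in> Atil G L"
proof (rule Atil_cancel)
  have H_carrier: "sle G H (carrier G)" using H unfolding sle_def by (auto dest: subgroup.subset)
  let ?d = "nm G L H (res G H pI_tuple)"
  have "(\<lambda>I. a I * pI_tuple I) \<in> P (carrier G)" by (rule P_mult[OF subgroup_self a pI_tuple_in_P])
  then have "nm G L H (res G H (\<lambda>I. a I * pI_tuple I)) \<in> P L"
    by (intro P_nm[OF L H] P_res[OF subgroup_self H_carrier])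
  then show "(\<lambda>I. nm G L H (res G H a) I * ?d I) \<in> Atil G L"
    using P_Atil[OF L] by (simp add: res_mult nm_mult)
  show "?d \<in> Atil G L"
    by (intro P_Atil[OF L] P_nm[OF L H] P_res[OF subgroup_self H_carrier] pI_tuple_in_P)
  show "\<forall>I. sle G I L \<longrightarrow> ?d I \<noteq> 0"
    using nm_res_nonzero[OF finite_carrier L H] pI_nonzero unfolding pI_tuple_def by simp
  show "\<forall>I. \<not> sle G I L \<longrightarrow> nm G L H (res G H a) I = 0" by (simp add: nm_vanish)
qed

lemma class_multiple_in_P_iff:
  assumes I: "subgroup I G"
  shows "(\<lambda>K. c * class_indicator G (carrier G) I K) \<in> P (carrier G) \<longleftrightarrow> pI I dvd c"
proof
  have "I \<in> conj_class G (carrier G) I"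
    using I by (intro self_in_conj_class subgroup_self) (simp add: sle_carrier_iff)
  moreover assume "(\<lambda>K. c * class_indicator G (carrier G) I K) \<in> P (carrier G)"
  ultimately show "pI I dvd c" using P_carrier I unfolding class_indicator_def by auto
next
  assume c: "pI I dvd c"
  have "pI K dvd c * class_indicator G (carrier G) I K" for K
  proof (cases "K \<in> conj_class G (carrier G) I")
    case True
    then obtain h where "h \<in> carrier G" "K = conjg G h I" unfolding conj_class_def by blast
    then show ?thesis using c pI_conjg I by simp
  qed (simp add: class_indicator_def)
  moreover have "class_indicator G (carrier G) I \<in> Atil G (carrier G)"
    using I by (simp add: class_indicator_Atil subgroup_self subgroup.subset)
  ultimately show "(\<lambda>K. c * class_indicator G (carrier G) I K) \<in> P (carrier G)"
    using P_carrier Atil_scale by simp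
qed

lemma pI_dvd_mult_cases:
  assumes I: "subgroup I G" and xy: "pI I dvd x * y"
  shows "pI I dvd x \<or> pI I dvd y"
proof -
  let ?E = "class_indicator G (carrier G) I"
  have E: "?E \<in> Atil G (carrier G)" using I by (simp add: class_indicator_Atil subgroup_self subgroup.subset)
  have "(\<lambda>K. x * ?E K) \<in> P (carrier G) \<or> (\<lambda>K. y * ?E K) \<in> P (carrier G)"
  proof (rule nakaoka_prime_carrierD[OF nakaoka_prime Atil_scale[OF E] Atil_scale[OF E]])
    fix L A B assume L: "subgroup L G" and A: "sle G A L" and B: "sle G B L"
    let ?Y = "\<lambda>J. nm G L A (res G A (\<lambda>K. x * ?E K)) J * nm G L B (res G B (\<lambda>K. y * ?E K)) J"
    show "?Y \<in> P L"
    proof (rule coordinatewise_dvd_imp_mem_ideal[OF finite_carrier L P_ideal[OF L]])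
      show "?Y \<in> Atil G L" by (intro Atil_mult nm_res_Atil Atil_scale E L A B)
      show "\<forall>J. sle G J L \<longrightarrow> (\<exists>z\<in>P L. z J dvd ?Y J)"
      proof (intro allI impI)
        fix J
        let ?z = "\<lambda>C. nm G L C (res G C (\<lambda>K. pI I * ?E K))"
        have "(\<lambda>K. pI I * ?E K) \<in> P (carrier G)" using class_multiple_in_P_iff[OF I] by simp
        then have "?z C \<in> P L" if "sle G C L" for C
          using that L by (intro P_nm P_res[OF subgroup_self]) (auto simp: sle_def subgroup.subset)
        moreover have "?z A J dvd ?Y J \<or> ?z B J dvd ?Y J"
          using dvd_power_mult_cases[OF xy] by (simp add: res_scale nm_scale)
        ultimately show "\<exists>z\<in>P L. z J dvd ?Y J" using A B by blast
      qed
    qed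
  qed
  then show ?thesis using class_multiple_in_P_iff[OF I] by simp
qed

lemma pI_dvd_p: assumes I: "subgroup I G" shows "pI I dvd p"
proof -
  obtain n where "pI I dvd p ^ n" using pI_dvd_power[OF I] by blast
  then show ?thesis
  proof (induction n)
    case 0
    then show ?case by (metis dvd_trans one_dvd power_0)
  next
    case (Suc n)
    then show ?case using pI_dvd_mult_cases[OF I, of p "p ^ n"] by auto
  qed
qed

lemma pI_cases: "subgroup I G \<Longrightarrow> pI I = 1 \<or> pI I = p"
  using pI_dvd_p pI_nonneg prime_p unfolding prime_int_iff by auto

lemma p_dvd_coordinate:
  assumes H: "subgroup H G" and a: "a \<in> P H" and J: "sle G J H" and pJ: "pI J \<noteq> 1"
  shows "p dvd a J"
proof -
  have J_sub: "subgroup J G" "J \<subseteq> H" using J unfolding sle_def by auto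
  let ?N = "normalizer G J"
  let ?b = "\<lambda>K. if K = J then a J else 0"
  have N: "subgroup ?N G" using J_sub by (simp add: normalizer_imp_subgroup subgroup.subset)
  have "?b = (\<lambda>K. class_indicator G J J K * res G J a K)"
    unfolding class_indicator_def res_def using J_sub by (auto simp: conj_class_of_self sle_def)
  then have "?b \<in> P J"
    using P_mult[OF J_sub(1) _ P_res[OF H J a]] class_indicator_Atil[OF J_sub(1)] J_sub
    by (simp add: subgroup.subset)
  then have "tr G (carrier G) ?N (nm G ?N J ?b) \<in> P (carrier G)"
    using J_sub subset_normalizer N
    by (intro P_tr[OF subgroup_self] P_nm[OF N]) (simp_all add: sle_def subgroup.subset)
  then have "pI J dvd tr G (carrier G) ?N (nm G ?N J ?b) J" using P_carrier J_sub by auto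
  also have "tr G (carrier G) ?N (nm G ?N J ?b) J = a J ^ card {dcos G J g J | g. g \<in> ?N}"
    using tr_from_normalizer[OF finite_carrier J_sub(1)] nm_point_to_normalizer_eq_0[OF finite_carrier J_sub(1)]
      nm_point_to_normalizer[OF J_sub(1)] by simp
  finally show ?thesis using pI_cases[OF J_sub(1)] pJ prime_dvd_power[OF prime_p] by auto
qed

lemma P_eq_Pfp:
  assumes H: "subgroup H G"
  shows "P H = Pfp G {I. subgroup I G \<and> pI I \<noteq> 1} p H"
proof
  show "P H \<subseteq> Pfp G {I. subgroup I G \<and> pI I \<noteq> 1} p H"
    using p_dvd_coordinate[OF H] P_Atil[OF H] unfolding Pfp_def by auto
next
  show "Pfp G {I. subgroup I G \<and> pI I \<noteq> 1} p H \<subseteq> P H"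
  proof
    fix y assume "y \<in> Pfp G {I. subgroup I G \<and> pI I \<noteq> 1} p H"
    then have y: "y \<in> Atil G H" and p_dvd: "\<And>K. sle G K H \<Longrightarrow> pI K \<noteq> 1 \<Longrightarrow> p dvd y K"
      unfolding Pfp_def sle_def by auto
    have y_dvd: "pI K dvd y K" if "sle G K H" for K
      using pI_cases[of K] p_dvd[OF that] that unfolding sle_def by (cases "pI K = 1") auto
    let ?d = "res G H pI_tuple"
    define r where "r = (\<lambda>K. if sle G K H then y K div pI K else 0)"
    have y_eq: "y = (\<lambda>K. r K * ?d K)"
    proof
      fix K show "y K = r K * ?d K"
        using y_dvd[of K] Atil_vanish[OF y, of K] unfolding r_def res_def pI_tuple_def sle_def by auto
    qed
    have d: "?d \<in> P H" using H by (intro P_res[OF subgroup_self] pI_tuple_in_P) (simp add: sle_carrier_iff sle_def subgroup.subset)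
    have "r \<in> Atil G H"
    proof (rule Atil_cancel)
      show "(\<lambda>K. r K * ?d K) \<in> Atil G H" using y y_eq by simp
      show "?d \<in> Atil G H" using P_Atil[OF H d] .
      show "\<forall>K. sle G K H \<longrightarrow> ?d K \<noteq> 0" using pI_nonzero by (simp add: res_def pI_tuple_def sle_def)
      show "\<forall>K. \<not> sle G K H \<longrightarrow> r K = 0" by (simp add: r_def)
    qed
    then show "y \<in> P H" using P_mult[OF H _ d] y_eq by simp
  qed
qed

end

theorem corollary4p11:
  fixes G :: "('a, 'b) monoid_scheme" and P :: "'a set \<Rightarrow> ('a set \<Rightarrow> int) set"
    and p :: int and pI :: "'a set \<Rightarrow> int"
  assumes "group G" and "finite (carrier G)"
    and "nakaoka_prime G P"
    and "prime p"
    and "P {\<one>\<^bsub>G\<^esub>} = {a \<in> Atil G {\<one>\<^bsub>G\<^esub>}. p dvd a {\<one>\<^bsub>G\<^esub>}}"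
    and "\<forall>I. subgroup I G \<longrightarrow> pI I \<ge> 0"
    and "\<forall>g\<in>carrier G. \<forall>I. subgroup I G \<longrightarrow> pI (conjg G g I) = pI I"
    and "P (carrier G) = {a \<in> Atil G (carrier G). \<forall>I. subgroup I G \<longrightarrow> pI I dvd a I}"
  shows "\<forall>H. subgroup H G \<longrightarrow> P H = Pfp G {I. subgroup I G \<and> pI I \<noteq> 1} p H"
proof -
  interpret gh_prime_ideal G P p pI
    by (intro gh_prime_ideal.intro gh_prime_ideal_axioms.intro) (use assms in auto)
  show ?thesis using P_eq_Pfp by blast
qed

end
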